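(* For all constants $0<\alpha\le \beta$ there is a constant $c>0$ such that the following holds. Let $k\le n$ be positive integers and let $h$ be an integer with $\alpha\log(n/k+1)\le h\le \beta\log(n/k+1)$ and $2\le h\le k$, and set $\ell=\lfloor k/h\rfloor$. Suppose that in the $\ell$-variant cup game on $n$ cups, some play of $T$ rounds ends with a cup of fill at least $4k$. Then $T\ge c\,h\,\ell^3$ (and hence $T=\Omega(k^3/h^2)$).
   Context: The $\ell$-variant cup game on $n$ cups ($\ell$ a positive integer): there are $n$ cups with integer fills, all initially $0$. In each round the player chooses an integer $k'\ge 0$ and an integer $q\ge1$ such that at least $2q$ cups have fill exactly $k'$ (if none exist the game ends). Among these cups, exactly $q$ are raised to fill $k'+1$; if $k'$ is a multiple of $\ell$ (a checkpoint $a\ell$, $a\ge0$), the other $q$ are left at $k'$, and otherwise $q$ other such cups are lowered to $k'-1$. (Thus a cup that has reached a checkpoint never goes below it.) *)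

theory Defs
  imports Complex_Main
begin

definition cup_step :: "nat \<Rightarrow> nat \<Rightarrow> (nat \<Rightarrow> int) \<Rightarrow> (nat \<Rightarrow> int) \<Rightarrow> bool" where
  "cup_step l n f g \<longleftrightarrow>
     (\<exists>(k'::int) (q::nat) U D.
        k' \<ge> 0 \<and> q \<ge> 1 \<and> U \<subseteq> {..<n} \<and> D \<subseteq> {..<n} \<and> U \<inter> D = {} \<and>
        card U = q \<and> card D = q \<and> (\<forall>i \<in> U \<union> D. f i = k') \<and>
        g = (\<lambda>i. if i \<in> U then f i + 1
                 else if i \<in> D \<and> \<not> (int l dvd k') then f i - 1
                 else f i))"

definition cup_play :: "nat \<Rightarrow> nat \<Rightarrow> nat \<Rightarrow> (nat \<Rightarrow> nat \<Rightarrow> int) \<Rightarrow> bool" where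
  "cup_play l n T s \<longleftrightarrow> s 0 = (\<lambda>_. 0) \<and> (\<forall>t < T. cup_step l n (s t) (s (Suc t)))"

end

theory Submission
  imports Defs
begin

text \<open>Fix a checkpoint \<open>b = a * l\<close> and its band of levels \<open>[b, b + l)\<close>. A cup never falls below a
  checkpoint it has reached, and a cup at height \<open>b + x\<close> in the band always rests on at least \<open>x\<close>
  cups with fills in \<open>[b, b + x)\<close>; so a cup of fill \<open>4 * h * l\<close> forces at least \<open>(4 * h - a) * l\<close>
  cups of fill at least \<open>a * l\<close>, for every \<open>a \<le> 2 * h\<close>.

  Let \<open>E a\<close> be this final number of cups and \<open>M a\<close> the number of rounds played at a level of band
  \<open>a\<close>. With \<open>d\<close> the depth of a fill in the band, a round at a level strictly inside the band moving
  \<open>2 * q\<close> cups raises the energy \<open>\<Sum> d * (d - 1)\<close> by \<open>2 * q\<close> and a quadratic potential by at least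
  \<open>2 * q\<^sup>2\<close>, while no round lowers the potential. As \<open>2 * q \<le> \<mu> * 2 * q\<^sup>2 + 1 / (2 * \<mu>)\<close>,
  optimising over \<open>\<mu>\<close> gives \<open>E (a + 1)\<^sup>2 * l * (l - 1)\<^sup>2 \<le> 6 * M a * E a\<^sup>2\<close>. A round acts on
  one level only, so \<open>\<Sum> M a \<le> T\<close>, and by AM-GM the sum of \<open>(E (a + 1) / E a)\<^sup>2\<close> over
  \<open>a < 2 * h\<close> is at least \<open>2 * h * (E (2 * h) / E 0) powr (1 / h) \<ge> 2 * h * (k / n) powr (1 / h)\<close>,
  which is at least \<open>2 * h * exp (- 1 / \<alpha>)\<close>.\<close>

lemma two_mult_le_mult_add_divide:
  fixes x \<mu> :: real
  assumes "0 < \<mu>"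
  shows "2 * x \<le> \<mu> * (2 * x\<^sup>2) + 1 / (2 * \<mu>)"
proof -
  have "0 \<le> (2 * \<mu> * x - 1)\<^sup>2 / (2 * \<mu>)"
    using assms by simp
  also have "\<dots> = \<mu> * (2 * x\<^sup>2) + 1 / (2 * \<mu>) - 2 * x"
    using assms by (simp add: field_simps power2_eq_square)
  finally show ?thesis
    by simp
qed

lemma sq_le_of_forall_pos_le:
  fixes A B C :: real
  assumes "0 < A" and "0 < B" and le: "\<And>\<mu>. 0 < \<mu> \<Longrightarrow> A \<le> \<mu> * B + C / \<mu>"
  shows "A\<^sup>2 \<le> 4 * B * C"
proof -
  have "A \<le> A / (2 * B) * B + C / (A / (2 * B))"
    using assms by (intro le) simp
  then have "A / 2 \<le> 2 * B * C / A"
    using assms by (simp add: field_simps)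
  then show ?thesis
    using assms by (simp add: field_simps power2_eq_square)
qed

lemma sum_squares_ratios_ge:
  fixes E :: "nat \<Rightarrow> real"
  assumes "0 < m" and pos: "\<And>a. a \<le> m \<Longrightarrow> 0 < E a"
  shows "real m * exp (2 * (ln (E m) - ln (E 0)) / real m) \<le> (\<Sum>a<m. (E (Suc a) / E a)\<^sup>2)"
proof -
  define t where "t = 2 * (ln (E m) - ln (E 0)) / real m"
  have tangent: "exp t * (1 + 2 * ln r - t) \<le> r\<^sup>2" if "0 < r" for r
  proof -
    have log_sq: "2 * ln r = ln (r\<^sup>2)"
      using that by (simp add: ln_realpow)
    have "exp t * (1 + (2 * ln r - t)) \<le> exp t * exp (2 * ln r - t)"
      by (intro mult_left_mono exp_ge_add_one_self) simp
    also have "\<dots> = r\<^sup>2"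
      using that log_sq by (simp add: exp_diff)
    finally show ?thesis
      by (simp add: algebra_simps)
  qed
  have "(\<Sum>a<m. ln (E (Suc a) / E a)) = (\<Sum>a<m. ln (E (Suc a)) - ln (E a))"
  proof (rule sum.cong)
    fix a
    assume "a \<in> {..<m}"
    then have "0 < E a" "0 < E (Suc a)"
      using pos by simp_all
    then show "ln (E (Suc a) / E a) = ln (E (Suc a)) - ln (E a)"
      by (simp add: ln_div)
  qed simp
  also have "\<dots> = ln (E m) - ln (E 0)"
    by (rule sum_lessThan_telescope)
  finally have telescope: "(\<Sum>a<m. ln (E (Suc a) / E a)) = ln (E m) - ln (E 0)" .
  have "(\<Sum>a<m. 1 + 2 * ln (E (Suc a) / E a) - t) = real m + 2 * (ln (E m) - ln (E 0)) - real m * t"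
    by (simp add: sum.distrib sum_subtractf sum_distrib_left[symmetric] telescope)
  also have "\<dots> = real m"
    using \<open>0 < m\<close> by (simp add: t_def)
  finally have "real m * exp t = (\<Sum>a<m. exp t * (1 + 2 * ln (E (Suc a) / E a) - t))"
    by (simp add: sum_distrib_left[symmetric])
  also have "\<dots> \<le> (\<Sum>a<m. (E (Suc a) / E a)\<^sup>2)"
    using pos by (intro sum_mono tangent) simp
  finally show ?thesis
    unfolding t_def .
qed

lemma cube_le_four_mult_pred_sq:
  fixes x :: real
  assumes "2 \<le> x"
  shows "x ^ 3 \<le> 4 * (x * (x - 1)\<^sup>2)"
proof -
  have "x * x \<le> (2 * (x - 1)) * (2 * (x - 1))"
    using assms by (intro mult_mono) simp_all
  then have "x * (x * x) \<le> x * ((2 * (x - 1)) * (2 * (x - 1)))"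
    using assms by (intro mult_left_mono) simp_all
  then show ?thesis
    by (simp add: power3_eq_cube power2_eq_square algebra_simps)
qed

definition lowered :: "nat \<Rightarrow> int \<Rightarrow> int" where
  "lowered l v = (if int l dvd v then v else v - 1)"

definition count_cups :: "nat \<Rightarrow> (nat \<Rightarrow> int) \<Rightarrow> (int \<Rightarrow> bool) \<Rightarrow> real" where
  "count_cups n f P = (\<Sum>i<n. if P (f i) then 1 else 0)"

text \<open>The multiset of fills loses \<open>2 * q\<close> copies of \<open>k\<close> and gains \<open>q\<close> copies each of \<open>k + 1\<close>
  and \<open>d\<close>; this is expressed by testing against every weight function \<open>\<phi>\<close>.\<close>

definition shifts_fills :: "nat \<Rightarrow> (nat \<Rightarrow> int) \<Rightarrow> (nat \<Rightarrow> int) \<Rightarrow> int \<Rightarrow> int \<Rightarrow> nat \<Rightarrow> bool" where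
  "shifts_fills n f g k d q \<longleftrightarrow>
     (\<forall>\<phi> :: int \<Rightarrow> real. (\<Sum>i<n. \<phi> (g i)) =
        (\<Sum>i<n. \<phi> (f i)) + real q * (\<phi> (k + 1) - \<phi> k) + real q * (\<phi> d - \<phi> k))"

lemma lowered_le: "lowered l v \<le> v"
  by (simp add: lowered_def)

lemma checkpoint_le_lowered: "int l dvd b \<Longrightarrow> b \<le> v \<Longrightarrow> b \<le> lowered l v"
  unfolding lowered_def by (cases "v = b") auto

lemma lowered_between_checkpoints:
  assumes "int l dvd b" and "b < v" and "v < b + int l"
  shows "lowered l v = v - 1"
proof -
  have "\<not> int l dvd v - b"
    using assms(2,3) zdvd_not_zless[of "v - b" "int l"] by simp
  then have "\<not> int l dvd v"
    using assms(1) dvd_diff by blast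
  then show ?thesis
    by (simp add: lowered_def)
qed

lemma count_cups_mono: "(\<And>v. P v \<Longrightarrow> Q v) \<Longrightarrow> count_cups n f P \<le> count_cups n f Q"
  unfolding count_cups_def by (rule sum_mono) auto

lemma count_cups_nonneg: "0 \<le> count_cups n f P"
  unfolding count_cups_def by (rule sum_nonneg) auto

lemma count_cups_le: "count_cups n f P \<le> real n"
  unfolding count_cups_def using sum_bounded_above[of "{..<n}" "\<lambda>i. if P (f i) then 1 else (0::real)" 1]
  by auto

lemma count_cups_split:
  "count_cups n f P = count_cups n f (\<lambda>v. P v \<and> Q v) + count_cups n f (\<lambda>v. P v \<and> \<not> Q v)"
  unfolding count_cups_def by (simp add: sum.distrib[symmetric]) (rule sum.cong, auto)

lemma count_cups_interval_Suc:
  assumes "b \<le> k"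
  shows "count_cups n f (\<lambda>v. b \<le> v \<and> v < k + 1) =
    count_cups n f (\<lambda>v. b \<le> v \<and> v < k) + count_cups n f (\<lambda>v. v = k)"
proof -
  have "(\<lambda>v. (b \<le> v \<and> v < k + 1) \<and> v < k) = (\<lambda>v. b \<le> v \<and> v < k)"
    and "(\<lambda>v. (b \<le> v \<and> v < k + 1) \<and> \<not> v < k) = (\<lambda>v. v = k)"
    using assms by auto
  then show ?thesis
    using count_cups_split[of n f "\<lambda>v. b \<le> v \<and> v < k + 1" "\<lambda>v. v < k"] by simp
qed

lemma shifts_fillsD:
  "shifts_fills n f g k d q \<Longrightarrow>
     (\<Sum>i<n. \<phi> (g i)) = (\<Sum>i<n. \<phi> (f i)) + real q * (\<phi> (k + 1) - \<phi> k) + real q * (\<phi> d - \<phi> k)"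
  by (simp add: shifts_fills_def)

lemma count_cups_shift:
  assumes "shifts_fills n f g k d q"
  shows "count_cups n g P = count_cups n f P
    + real q * ((if P (k + 1) then 1 else 0) - (if P k then 1 else 0))
    + real q * ((if P d then 1 else 0) - (if P k then 1 else 0))"
  using assms unfolding shifts_fills_def count_cups_def
  by (erule_tac x = "\<lambda>v. if P v then 1 else 0" in allE) simp

lemma count_cups_ge_card:
  assumes "U \<subseteq> {..<n}" and "\<And>i. i \<in> U \<Longrightarrow> P (f i)"
  shows "real (card U) \<le> count_cups n f P"
proof -
  have "real (card U) = (\<Sum>i\<in>U. if P (f i) then 1 else 0)"
    using assms(2) by simp
  also have "\<dots> \<le> count_cups n f P"
    unfolding count_cups_def by (rule sum_mono2) (use assms(1) in auto)
  finally show ?thesis .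
qed

lemma shifts_fillsI:
  assumes U: "U \<subseteq> {..<n}" and D: "D \<subseteq> {..<n}" and "U \<inter> D = {}" and "card U = q" and "card D = q"
    and "\<And>i. i \<in> U \<union> D \<Longrightarrow> f i = k" and "\<And>i. i \<in> U \<Longrightarrow> g i = k + 1"
    and "\<And>i. i \<in> D \<Longrightarrow> g i = d" and "\<And>i. i \<notin> U \<union> D \<Longrightarrow> g i = f i"
  shows "shifts_fills n f g k d q"
  unfolding shifts_fills_def
proof
  fix \<phi> :: "int \<Rightarrow> real"
  have "finite U" "finite D"
    using U D finite_subset by blast+
  have "(\<Sum>i<n. \<phi> (g i)) - (\<Sum>i<n. \<phi> (f i)) = (\<Sum>i\<in>U \<union> D. \<phi> (g i) - \<phi> (f i))"
    unfolding sum_subtractf[symmetric] by (rule sum.mono_neutral_right) (use assms in auto)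
  also have "\<dots> = (\<Sum>i\<in>U. \<phi> (k + 1) - \<phi> k) + (\<Sum>i\<in>D. \<phi> d - \<phi> k)"
    using \<open>finite U\<close> \<open>finite D\<close> assms(3,6-8) by (simp add: sum.union_disjoint)
  finally show "(\<Sum>i<n. \<phi> (g i)) =
      (\<Sum>i<n. \<phi> (f i)) + real q * (\<phi> (k + 1) - \<phi> k) + real q * (\<phi> d - \<phi> k)"
    using assms(4,5) by simp
qed

lemma cup_stepE:
  assumes "cup_step l n f g"
  obtains k q where "\<exists>u<n. f u = k \<and> g u = k + 1"
    "1 \<le> q" "2 * real q \<le> count_cups n f (\<lambda>v. v = k)"
    "\<And>i. g i \<noteq> f i \<Longrightarrow> f i = k \<and> (g i = k + 1 \<or> g i = lowered l k)"
    "shifts_fills n f g k (lowered l k) q"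
proof -
  obtain k q U D where "1 \<le> q" and U: "U \<subseteq> {..<n}" and D: "D \<subseteq> {..<n}" and "U \<inter> D = {}"
    and "card U = q" "card D = q" and fk: "\<forall>i \<in> U \<union> D. f i = k"
    and g: "g = (\<lambda>i. if i \<in> U then f i + 1 else if i \<in> D \<and> \<not> int l dvd k then f i - 1 else f i)"
    using assms unfolding cup_step_def by auto
  have gU: "g i = k + 1" if "i \<in> U" for i
    using that fk g by auto
  have gD: "g i = lowered l k" if "i \<in> D" for i
    using that fk g \<open>U \<inter> D = {}\<close> by (auto simp: lowered_def)
  have g_other: "g i = f i" if "i \<notin> U \<union> D" for i
    using that g by auto
  have "finite U" "finite D"
    using U D finite_subset by blast+
  then have "card (U \<union> D) = 2 * q"
    using \<open>U \<inter> D = {}\<close> \<open>card U = q\<close> \<open>card D = q\<close> by (simp add: card_Un_disjoint)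
  then have "2 * real q \<le> count_cups n f (\<lambda>v. v = k)"
    using count_cups_ge_card[of "U \<union> D" n "\<lambda>v. v = k" f] U D fk by simp
  obtain u where "u \<in> U"
    using \<open>1 \<le> q\<close> \<open>card U = q\<close> by fastforce
  show thesis
  proof (rule that)
    show "\<exists>u<n. f u = k \<and> g u = k + 1"
      using \<open>u \<in> U\<close> U fk gU by blast
    show "f i = k \<and> (g i = k + 1 \<or> g i = lowered l k)" if "g i \<noteq> f i" for i
      using that fk gU gD g_other by blast
    show "shifts_fills n f g k (lowered l k) q"
      by (rule shifts_fillsI[OF U D \<open>U \<inter> D = {}\<close> \<open>card U = q\<close> \<open>card D = q\<close>])
        (use fk gU gD g_other in auto)
  qed fact+
qed

lemma cup_step_le_Suc:
  assumes "cup_step l n f g"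
  shows "g i \<le> f i + 1"
proof (rule cup_stepE[OF assms])
  fix k
  assume changed: "\<And>i. g i \<noteq> f i \<Longrightarrow> f i = k \<and> (g i = k + 1 \<or> g i = lowered l k)"
  show ?thesis
    using changed[of i] lowered_le[of l k] by (cases "g i = f i") auto
qed

lemma cup_step_checkpoint_mono:
  assumes "cup_step l n f g" and "int l dvd b" and "b \<le> f i"
  shows "b \<le> g i"
proof (rule cup_stepE[OF assms(1)])
  fix k
  assume changed: "\<And>i. g i \<noteq> f i \<Longrightarrow> f i = k \<and> (g i = k + 1 \<or> g i = lowered l k)"
  show "b \<le> g i"
    using changed[of i] assms(3) checkpoint_le_lowered[OF assms(2), of k] by (cases "g i = f i") auto
qed

lemma cup_play_step: "cup_play l n T s \<Longrightarrow> t < T \<Longrightarrow> cup_step l n (s t) (s (Suc t))"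
  unfolding cup_play_def by simp

lemma cup_play_fill_le:
  assumes "cup_play l n T s" and "t \<le> T"
  shows "s t i \<le> int t"
  using assms(2)
proof (induction t)
  case 0
  then show ?case using assms(1) by (simp add: cup_play_def)
next
  case (Suc t)
  then show ?case
    using cup_step_le_Suc[OF cup_play_step[OF assms(1)], of t i] by simp
qed

lemma cup_play_checkpoint_mono:
  assumes "cup_play l n T s" and "int l dvd b" and "b \<le> s t i" and "t \<le> t'" and "t' \<le> T"
  shows "b \<le> s t' i"
  using assms(4,5)
proof (induction t' rule: dec_induct)
  case (step t')
  then show ?case
    using cup_step_checkpoint_mono[OF cup_play_step[OF assms(1)] assms(2)] by simp
qed (use assms(3) in simp)

section \<open>Supported bands\<close>

locale band =
  fixes n l :: nat and b :: int
  assumes width_pos: "0 < l" and checkpoint: "int l dvd b" and base_nonneg: "0 \<le> b"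
begin

definition supported :: "(nat \<Rightarrow> int) \<Rightarrow> bool" where
  "supported f \<longleftrightarrow> (\<forall>x. 1 \<le> x \<longrightarrow> x \<le> l \<longrightarrow> (\<exists>i<n. b + int x \<le> f i) \<longrightarrow>
     real x \<le> count_cups n f (\<lambda>v. b \<le> v \<and> v < b + int x))"

lemma supported_count_below:
  assumes sup: "supported f" and "i < n" and "b \<le> f i" and "f i < b + int l"
  shows "of_int (f i - b) \<le> count_cups n f (\<lambda>v. b \<le> v \<and> v < f i)"
proof (cases "f i = b")
  case True
  then show ?thesis
    using count_cups_nonneg by simp
next
  case False
  define x where "x = nat (f i - b)"
  have "1 \<le> x" "x \<le> l" and fi: "f i = b + int x"
    using assms(3,4) False by (auto simp: x_def)
  moreover have "\<exists>i<n. b + int x \<le> f i"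
    using \<open>i < n\<close> fi by auto
  ultimately have "real x \<le> count_cups n f (\<lambda>v. b \<le> v \<and> v < b + int x)"
    using sup unfolding supported_def by blast
  then show ?thesis
    by (simp add: fi)
qed

lemma interval_count_shift_mono:
  assumes shift: "shifts_fills n f g k (lowered l k) q" and "k + 1 \<noteq> c"
  shows "count_cups n f (\<lambda>v. b \<le> v \<and> v < c) \<le> count_cups n g (\<lambda>v. b \<le> v \<and> v < c)"
  using count_cups_shift[OF shift, of "\<lambda>v. b \<le> v \<and> v < c"] assms(2)
    lowered_le[of l k] checkpoint_le_lowered[OF checkpoint, of k] by auto

lemma interval_count_shift_top:
  assumes shift: "shifts_fills n f g k (lowered l k) q" and "b \<le> k"
  shows "count_cups n g (\<lambda>v. b \<le> v \<and> v < k + 1) = count_cups n f (\<lambda>v. b \<le> v \<and> v < k + 1) - real q"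
  using count_cups_shift[OF shift, of "\<lambda>v. b \<le> v \<and> v < k + 1"] assms(2)
    lowered_le[of l k] checkpoint_le_lowered[OF checkpoint, of k] by simp

lemma supported_step:
  assumes sup: "supported f" and step: "cup_step l n f g"
  shows "supported g"
  unfolding supported_def
proof (intro allI impI)
  fix x :: nat
  assume x: "1 \<le> x" "x \<le> l" and "\<exists>i<n. b + int x \<le> g i"
  then obtain i where "i < n" and high: "b + int x \<le> g i"
    by blast
  obtain k q where "\<exists>u<n. f u = k \<and> g u = k + 1"
    and "1 \<le> q" and twice: "2 * real q \<le> count_cups n f (\<lambda>v. v = k)"
    and changed: "\<And>j. g j \<noteq> f j \<Longrightarrow> f j = k \<and> (g j = k + 1 \<or> g j = lowered l k)"
    and shift: "shifts_fills n f g k (lowered l k) q"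
    using step by (rule cup_stepE) (rule that)
  show "real x \<le> count_cups n g (\<lambda>v. b \<le> v \<and> v < b + int x)"
  proof (cases "k + 1 = b + int x")
    case False
    have "b + int x \<le> f i"
      using changed[of i] high lowered_le[of l k] False by (cases "g i = f i") auto
    then have "real x \<le> count_cups n f (\<lambda>v. b \<le> v \<and> v < b + int x)"
      using sup x \<open>i < n\<close> unfolding supported_def by blast
    also have "\<dots> \<le> count_cups n g (\<lambda>v. b \<le> v \<and> v < b + int x)"
      using shift False by (rule interval_count_shift_mono)
    finally show ?thesis .
  next
    case True
    with x have "b \<le> k" "k < b + int l"
      by auto
    obtain u where "u < n" "f u = k"
      using \<open>\<exists>u<n. f u = k \<and> g u = k + 1\<close> by blast
    have "of_int (k - b) \<le> count_cups n f (\<lambda>v. b \<le> v \<and> v < k)"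
      using supported_count_below[OF sup \<open>u < n\<close>] \<open>f u = k\<close> \<open>b \<le> k\<close> \<open>k < b + int l\<close> by simp
    moreover have "count_cups n f (\<lambda>v. b \<le> v \<and> v < k + 1) =
        count_cups n f (\<lambda>v. b \<le> v \<and> v < k) + count_cups n f (\<lambda>v. v = k)"
      using \<open>b \<le> k\<close> by (rule count_cups_interval_Suc)
    moreover have "count_cups n g (\<lambda>v. b \<le> v \<and> v < k + 1) =
        count_cups n f (\<lambda>v. b \<le> v \<and> v < k + 1) - real q"
      using shift \<open>b \<le> k\<close> by (rule interval_count_shift_top)
    moreover have "real x = of_int (k - b) + 1"
      using True by simp
    ultimately show ?thesis
      using True twice \<open>1 \<le> q\<close> by simp
  qed
qed

lemma supported_play:
  assumes play: "cup_play l n T s" and "t \<le> T"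
  shows "supported (s t)"
  using assms(2)
proof (induction t)
  case 0
  then show ?case
    using play base_nonneg by (auto simp: cup_play_def supported_def)
next
  case (Suc t)
  then show ?case
    using supported_step cup_play_step[OF play] by simp
qed

end

lemma band_at_multiple:
  fixes l a :: nat
  shows "0 < l \<Longrightarrow> band l (int (a * l))"
  by unfold_locales auto

lemma count_above_checkpoint_ge:
  assumes play: "cup_play l n T s" and "0 < l" and top: "\<exists>i<n. int (m * l) \<le> s T i" and "a \<le> m"
  shows "real ((m - a) * l) \<le> count_cups n (s T) (\<lambda>v. int (a * l) \<le> v)"
  using \<open>a \<le> m\<close>
proof (induction a rule: inc_induct)
  case base
  then show ?case using count_cups_nonneg by simp
next
  case (step a)
  interpret band n l "int (a * l)"
    using \<open>0 < l\<close> by (rule band_at_multiple)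
  have "Suc a * l \<le> m * l"
    using step.hyps by (intro mult_le_mono1) simp
  then have "int (Suc a * l) \<le> int (m * l)"
    by (simp only: of_nat_le_iff)
  with top have "\<exists>i<n. int (a * l) + int l \<le> s T i"
    by force
  then have "real l \<le> count_cups n (s T) (\<lambda>v. int (a * l) \<le> v \<and> v < int (a * l) + int l)"
    using supported_play[OF play le_refl] \<open>0 < l\<close> unfolding supported_def by simp
  moreover have "count_cups n (s T) (\<lambda>v. int (a * l) \<le> v) =
      count_cups n (s T) (\<lambda>v. int (a * l) \<le> v \<and> int (Suc a * l) \<le> v)
      + count_cups n (s T) (\<lambda>v. int (a * l) \<le> v \<and> \<not> int (Suc a * l) \<le> v)"
    by (rule count_cups_split)
  moreover have "(\<lambda>v. int (a * l) \<le> v \<and> int (Suc a * l) \<le> v) = (\<lambda>v. int (Suc a * l) \<le> v)"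
    and "(\<lambda>v. int (a * l) \<le> v \<and> \<not> int (Suc a * l) \<le> v) = (\<lambda>v. int (a * l) \<le> v \<and> v < int (a * l) + int l)"
    by (auto simp: algebra_simps)
  moreover have "(m - a) * l = (m - Suc a) * l + l"
    using step.hyps by (metis Suc_diff_Suc add.commute mult_Suc)
  ultimately show ?case
    using step.IH by simp
qed

section \<open>A potential for one band\<close>

context band
begin

definition depth :: "int \<Rightarrow> int" where
  "depth v = max 0 (min (int l) (v - b))"

definition energy :: "(nat \<Rightarrow> int) \<Rightarrow> real" where
  "energy f = (\<Sum>i<n. of_int (depth (f i) * (depth (f i) - 1)))"

definition mass :: "(nat \<Rightarrow> int) \<Rightarrow> real" where
  "mass f = (\<Sum>i<n. of_int (depth (f i)))"

definition cups_above :: "(nat \<Rightarrow> int) \<Rightarrow> nat \<Rightarrow> real" where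
  "cups_above f x = count_cups n f (\<lambda>v. b + int x < v)"

definition spread :: "real \<Rightarrow> (nat \<Rightarrow> int) \<Rightarrow> real" where
  "spread N f = (\<Sum>x<l. cups_above f x * (N - cups_above f x))"

text \<open>The mass term pays for the possible drop of \<open>spread\<close> in a round at the checkpoint level \<open>b\<close>.\<close>

definition potential :: "real \<Rightarrow> (nat \<Rightarrow> int) \<Rightarrow> real" where
  "potential N f = spread N f + 2 * N * mass f"

definition moves_in_band :: "(nat \<Rightarrow> int) \<Rightarrow> (nat \<Rightarrow> int) \<Rightarrow> bool" where
  "moves_in_band f g \<longleftrightarrow> (\<exists>i<n. g i \<noteq> f i \<and> b \<le> f i \<and> f i < b + int l)"

lemma spread_diff:
  "spread N g - spread N f = (\<Sum>x<l. (cups_above g x - cups_above f x) * (N - cups_above g x - cups_above f x))"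
  unfolding spread_def sum_subtractf[symmetric] by (rule sum.cong) (simp_all add: algebra_simps)

lemma potential_step_outside:
  assumes shift: "shifts_fills n f g k (lowered l k) q" and out: "k < b \<or> b + int l \<le> k"
  shows "energy g = energy f" and "potential N g = potential N f"
proof -
  have lowered_high: "b + int l \<le> lowered l k" if "b + int l \<le> k"
    using checkpoint_le_lowered[of l "b + int l" k] checkpoint that by simp
  have depth: "depth (k + 1) = depth k" "depth (lowered l k) = depth k"
    using out lowered_high lowered_le[of l k] by (auto simp: depth_def)
  show "energy g = energy f"
    using shifts_fillsD[OF shift, of "\<lambda>v. of_int (depth v * (depth v - 1))"] depth
    unfolding energy_def by simp
  have "mass g = mass f"
    using shifts_fillsD[OF shift, of "\<lambda>v. of_int (depth v)"] depth unfolding mass_def by simp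
  moreover have "cups_above g x = cups_above f x" if "x < l" for x
    using count_cups_shift[OF shift, of "\<lambda>v. b + int x < v"] out lowered_high lowered_le[of l k] that
    unfolding cups_above_def by auto
  then have "spread N g = spread N f"
    unfolding spread_def by simp
  ultimately show "potential N g = potential N f"
    unfolding potential_def by simp
qed

lemma potential_step_bottom:
  assumes shift: "shifts_fills n f g b (lowered l b) q" and bound: "cups_above g 0 \<le> N"
  shows "energy g = energy f" and "potential N f \<le> potential N g"
proof -
  have lowered: "lowered l b = b"
    using checkpoint by (simp add: lowered_def)
  have depth: "depth b = 0" "depth (b + 1) = 1"
    using width_pos by (auto simp: depth_def)
  show "energy g = energy f"
    using shifts_fillsD[OF shift, of "\<lambda>v. of_int (depth v * (depth v - 1))"] lowered depth
    unfolding energy_def by simp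
  have mass: "mass g = mass f + real q"
    using shifts_fillsD[OF shift, of "\<lambda>v. of_int (depth v)"] lowered depth unfolding mass_def by simp
  have cups_above: "cups_above g x = cups_above f x + (if x = 0 then real q else 0)" for x
    using count_cups_shift[OF shift, of "\<lambda>v. b + int x < v"] lowered unfolding cups_above_def by auto
  have "spread N g - spread N f = (\<Sum>x<l. if x = 0 then real q * (N - cups_above g 0 - cups_above f 0) else 0)"
    unfolding spread_diff by (rule sum.cong) (auto simp: cups_above)
  then have diff: "potential N g - potential N f = real q * (3 * N - cups_above g 0 - cups_above f 0)"
    using width_pos unfolding potential_def mass by (simp add: algebra_simps)
  moreover have "0 \<le> cups_above f 0"
    unfolding cups_above_def by (rule count_cups_nonneg)
  ultimately have "0 \<le> 3 * N - cups_above g 0 - cups_above f 0"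
    using bound cups_above[of 0] by simp
  then have "0 \<le> real q * (3 * N - cups_above g 0 - cups_above f 0)"
    by simp
  then show "potential N f \<le> potential N g"
    using diff by simp
qed

lemma cups_above_Suc:
  "cups_above f x = cups_above f (Suc x) + count_cups n f (\<lambda>v. v = b + int (Suc x))"
proof -
  have "(\<lambda>v. b + int x < v \<and> b + int (Suc x) < v) = (\<lambda>v. b + int (Suc x) < v)"
    and "(\<lambda>v. b + int x < v \<and> \<not> b + int (Suc x) < v) = (\<lambda>v. v = b + int (Suc x))"
    by auto
  then show ?thesis
    using count_cups_split[of n f "\<lambda>v. b + int x < v" "\<lambda>v. b + int (Suc x) < v"]
    unfolding cups_above_def by simp
qed

lemma spread_move_up:
  assumes "Suc x < l"
    and moved: "\<And>y. cups_above g y = cups_above f y + (if y = Suc x then c else 0) - (if y = x then c else 0)"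
  shows "spread N g - spread N f = 2 * c * (cups_above f x - cups_above f (Suc x)) - 2 * c\<^sup>2"
proof -
  define A B where "A = cups_above f (Suc x)" and "B = cups_above f x"
  have "spread N g - spread N f = (\<Sum>y<l. (if y = Suc x then c * (N - 2 * A - c) else 0)
      + (if y = x then - c * (N - 2 * B + c) else 0))"
    unfolding spread_diff
  proof (rule sum.cong)
    fix y
    show "(cups_above g y - cups_above f y) * (N - cups_above g y - cups_above f y) =
        (if y = Suc x then c * (N - 2 * A - c) else 0) + (if y = x then - c * (N - 2 * B + c) else 0)"
      by (cases "y = Suc x"; cases "y = x") (auto simp: moved A_def B_def algebra_simps)
  qed simp
  also have "\<dots> = 2 * c * (B - A) - 2 * c\<^sup>2"
    using assms(1) by (simp add: sum.distrib algebra_simps power2_eq_square)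
  finally show ?thesis
    unfolding A_def B_def .
qed

lemma potential_step_inside:
  assumes shift: "shifts_fills n f g k (lowered l k) q" and "b < k" and "k < b + int l"
    and twice: "2 * real q \<le> count_cups n f (\<lambda>v. v = k)"
  shows "energy g = energy f + 2 * real q" and "potential N f + 2 * (real q)\<^sup>2 \<le> potential N g"
proof -
  define x where "x = nat (k - b - 1)"
  have x: "Suc x < l" "k = b + int (Suc x)"
    using assms(2,3) by (auto simp: x_def)
  have lowered: "lowered l k = k - 1"
    using checkpoint assms(2,3) by (rule lowered_between_checkpoints)
  have depth: "depth (k + 1) = int x + 2" "depth k = int x + 1" "depth (k - 1) = int x"
    using x by (auto simp: depth_def)
  show "energy g = energy f + 2 * real q"
    using shifts_fillsD[OF shift, of "\<lambda>v. of_int (depth v * (depth v - 1))"] lowered depth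
    unfolding energy_def by (simp add: algebra_simps)
  have "mass g = mass f"
    using shifts_fillsD[OF shift, of "\<lambda>v. of_int (depth v)"] lowered depth unfolding mass_def by simp
  have "cups_above g y = cups_above f y + (if y = Suc x then real q else 0) - (if y = x then real q else 0)" for y
    using count_cups_shift[OF shift, of "\<lambda>v. b + int y < v"] lowered x unfolding cups_above_def by auto
  then have spread: "spread N g - spread N f =
      2 * real q * (cups_above f x - cups_above f (Suc x)) - 2 * (real q)\<^sup>2"
    using x(1) by (intro spread_move_up)
  have "2 * real q * (2 * real q) \<le> 2 * real q * (cups_above f x - cups_above f (Suc x))"
    using twice cups_above_Suc[of f x] x(2) by (intro mult_left_mono) simp_all
  then show "potential N f + 2 * (real q)\<^sup>2 \<le> potential N g"
    using spread \<open>mass g = mass f\<close> unfolding potential_def by (simp add: power2_eq_square)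
qed

lemma energy_step_le:
  assumes step: "cup_step l n f g" and "0 < \<mu>" and bound: "cups_above g 0 \<le> N"
  shows "energy g - energy f \<le>
    \<mu> * (potential N g - potential N f) + (if moves_in_band f g then 1 / (2 * \<mu>) else 0)"
proof (rule cup_stepE[OF step])
  fix k q
  assume moved: "\<exists>u<n. f u = k \<and> g u = k + 1"
    and twice: "2 * real q \<le> count_cups n f (\<lambda>v. v = k)"
    and shift: "shifts_fills n f g k (lowered l k) q"
  have slack: "0 \<le> (if moves_in_band f g then 1 / (2 * \<mu>) else 0)"
    using \<open>0 < \<mu>\<close> by simp
  consider "k < b \<or> b + int l \<le> k" | "k = b" | "b < k \<and> k < b + int l"
    by linarith
  then show ?thesis
  proof cases
    case 1
    then show ?thesis
      using potential_step_outside[OF shift] slack by simp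
  next
    case 2
    with shift have "shifts_fills n f g b (lowered l b) q"
      by simp
    then have "energy g = energy f" and "0 \<le> \<mu> * (potential N g - potential N f)"
      using potential_step_bottom[OF _ bound] \<open>0 < \<mu>\<close> by auto
    then show ?thesis
      using slack by simp
  next
    case 3
    then have "moves_in_band f g"
      using moved unfolding moves_in_band_def by force
    have "energy g - energy f = 2 * real q"
      using potential_step_inside(1)[OF shift _ _ twice] 3 by simp
    also have "\<dots> \<le> \<mu> * (2 * (real q)\<^sup>2) + 1 / (2 * \<mu>)"
      using \<open>0 < \<mu>\<close> by (rule two_mult_le_mult_add_divide)
    also have "\<mu> * (2 * (real q)\<^sup>2) \<le> \<mu> * (potential N g - potential N f)"
      using potential_step_inside(2)[OF shift _ _ twice, of N] 3 \<open>0 < \<mu>\<close> by simp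
    finally show ?thesis
      using \<open>moves_in_band f g\<close> by simp
  qed
qed

lemma cups_above_le_final:
  assumes play: "cup_play l n T s" and "t \<le> T"
  shows "cups_above (s t) x \<le> count_cups n (s T) (\<lambda>v. b \<le> v)"
  unfolding cups_above_def count_cups_def
proof (rule sum_mono)
  fix i
  have "b \<le> s T i" if "b + int x < s t i"
    using cup_play_checkpoint_mono[OF play checkpoint _ \<open>t \<le> T\<close> le_refl] that by simp
  then show "(if b + int x < s t i then 1 else 0) \<le> (if b \<le> s T i then 1 else (0::real))"
    by simp
qed

lemma energy_play_le:
  assumes play: "cup_play l n T s" and "0 < \<mu>" and "t \<le> T"
  shows "energy (s t) \<le> \<mu> * potential (count_cups n (s T) (\<lambda>v. b \<le> v)) (s t)
    + (\<Sum>t'<t. if moves_in_band (s t') (s (Suc t')) then 1 else 0) / (2 * \<mu>)"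
  using \<open>t \<le> T\<close>
proof (induction t)
  case 0
  have "s 0 = (\<lambda>_. 0)"
    using play by (simp add: cup_play_def)
  moreover have "depth 0 = 0"
    using base_nonneg by (simp add: depth_def)
  ultimately show ?case
    using base_nonneg
    by (simp add: energy_def potential_def spread_def mass_def cups_above_def count_cups_def)
next
  case (Suc t)
  let ?N = "count_cups n (s T) (\<lambda>v. b \<le> v)"
  have "energy (s (Suc t)) - energy (s t) \<le> \<mu> * (potential ?N (s (Suc t)) - potential ?N (s t))
      + (if moves_in_band (s t) (s (Suc t)) then 1 / (2 * \<mu>) else 0)"
    using Suc.prems
    by (intro energy_step_le cup_play_step[OF play] \<open>0 < \<mu>\<close> cups_above_le_final[OF play]) simp_all
  moreover have "energy (s t) \<le> \<mu> * potential ?N (s t)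
      + (\<Sum>t'<t. if moves_in_band (s t') (s (Suc t')) then 1 else 0) / (2 * \<mu>)"
    using Suc by simp
  ultimately show ?case
    by (cases "moves_in_band (s t) (s (Suc t))") (simp_all add: add_divide_distrib right_diff_distrib)
qed

lemma energy_ge_count_full:
  "count_cups n f (\<lambda>v. b + int l \<le> v) * (real l * (real l - 1)) \<le> energy f"
  unfolding count_cups_def energy_def sum_distrib_right
proof (rule sum_mono)
  fix i
  have "0 \<le> depth (f i)"
    by (simp add: depth_def)
  then have "0 \<le> depth (f i) * (depth (f i) - 1)"
    by (cases "depth (f i) = 0") simp_all
  then have "0 \<le> (of_int (depth (f i) * (depth (f i) - 1)) :: real)"
    by (rule of_int_0_le_iff[THEN iffD2])
  moreover have "depth (f i) = int l" if "b + int l \<le> f i"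
    using that by (simp add: depth_def)
  ultimately show "(if b + int l \<le> f i then 1 else 0) * (real l * (real l - 1))
      \<le> of_int (depth (f i) * (depth (f i) - 1))"
    by (cases "b + int l \<le> f i") simp_all
qed

lemma potential_le:
  assumes "\<And>x. cups_above f x \<le> N" and "0 \<le> N" and "mass f \<le> real l * N"
  shows "potential N f \<le> 3 * real l * N\<^sup>2"
proof -
  have "spread N f \<le> real (card {..<l}) * N\<^sup>2"
    unfolding spread_def
  proof (rule sum_bounded_above)
    fix x
    have "0 \<le> cups_above f x"
      unfolding cups_above_def by (rule count_cups_nonneg)
    then show "cups_above f x * (N - cups_above f x) \<le> N\<^sup>2"
      using assms(1)[of x] by (simp add: power2_eq_square mult_mono)
  qed
  moreover have "2 * N * mass f \<le> 2 * N * (real l * N)"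
    using assms(2,3) by (simp add: mult_left_mono)
  ultimately show ?thesis
    unfolding potential_def by (simp add: power2_eq_square algebra_simps)
qed

lemma mass_le: "mass f \<le> real l * count_cups n f (\<lambda>v. b \<le> v)"
  unfolding mass_def count_cups_def sum_distrib_left
  by (rule sum_mono) (auto simp: depth_def)

lemma moves_in_band_lower_bound:
  assumes play: "cup_play l n T s" and "2 \<le> l" and pos: "0 < count_cups n (s T) (\<lambda>v. b + int l \<le> v)"
  shows "(count_cups n (s T) (\<lambda>v. b + int l \<le> v))\<^sup>2 * (real l * (real l - 1)\<^sup>2)
    \<le> 6 * (\<Sum>t<T. if moves_in_band (s t) (s (Suc t)) then 1 else 0) * (count_cups n (s T) (\<lambda>v. b \<le> v))\<^sup>2"
proof -
  define E where "E = count_cups n (s T) (\<lambda>v. b + int l \<le> v)"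
  define N where "N = count_cups n (s T) (\<lambda>v. b \<le> v)"
  define M where "M = (\<Sum>t<T. if moves_in_band (s t) (s (Suc t)) then 1 else (0::real))"
  have "E \<le> N"
    unfolding E_def N_def by (rule count_cups_mono) simp
  have "potential N (s T) \<le> 3 * real l * N\<^sup>2"
    using cups_above_le_final[OF play le_refl] mass_le count_cups_nonneg
    unfolding N_def by (intro potential_le) simp_all
  then have bound: "E * (real l * (real l - 1)) \<le> \<mu> * (3 * real l * N\<^sup>2) + (M / 2) / \<mu>"
    if "0 < \<mu>" for \<mu>
  proof -
    have "E * (real l * (real l - 1)) \<le> \<mu> * potential N (s T) + M / (2 * \<mu>)"
      using energy_play_le[OF play that le_refl] energy_ge_count_full[of "s T"]
      unfolding E_def N_def M_def by linarith
    moreover have "\<mu> * potential N (s T) \<le> \<mu> * (3 * real l * N\<^sup>2)"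
      using \<open>potential N (s T) \<le> _\<close> that by (intro mult_left_mono) simp_all
    ultimately show ?thesis
      by simp
  qed
  have "0 < E * (real l * (real l - 1))" and "0 < 3 * real l * N\<^sup>2"
    using pos \<open>2 \<le> l\<close> \<open>E \<le> N\<close> unfolding E_def by simp_all
  from sq_le_of_forall_pos_le[OF this bound]
  have "(E * (real l * (real l - 1)))\<^sup>2 \<le> 4 * (3 * real l * N\<^sup>2) * (M / 2)" .
  then have "real l * (E\<^sup>2 * (real l * (real l - 1)\<^sup>2)) \<le> real l * (6 * M * N\<^sup>2)"
    by (simp add: power2_eq_square algebra_simps)
  then show ?thesis
    using \<open>2 \<le> l\<close> unfolding E_def N_def M_def by simp
qed

end

section \<open>Combining the bands\<close>

lemma count_above_checkpoint_antimono:
  assumes "a \<le> a'"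
  shows "count_cups n f (\<lambda>v. int (a' * l) \<le> v) \<le> count_cups n f (\<lambda>v. int (a * l) \<le> v)"
proof (rule count_cups_mono)
  have "int (a * l) \<le> int (a' * l)"
    using assms by (simp only: of_nat_le_iff mult_le_mono1)
  then show "int (a * l) \<le> v" if "int (a' * l) \<le> v" for v
    using that by simp
qed

lemma moves_in_band_unique:
  assumes step: "cup_step l n f g" and "0 < l"
    and "band.moves_in_band n l (int (a * l)) f g" and "band.moves_in_band n l (int (a' * l)) f g"
  shows "a = a'"
proof (rule cup_stepE[OF step])
  fix k
  assume changed: "\<And>i. g i \<noteq> f i \<Longrightarrow> f i = k \<and> (g i = k + 1 \<or> g i = lowered l k)"
  have "int c * int l \<le> k \<and> k < (int c + 1) * int l"
    if moves: "band.moves_in_band n l (int (c * l)) f g" for c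
  proof -
    obtain i where "g i \<noteq> f i" "int (c * l) \<le> f i" "f i < int (c * l) + int l"
      using moves unfolding band.moves_in_band_def[OF band_at_multiple[OF \<open>0 < l\<close>]] by blast
    then show ?thesis
      using changed[of i] by (simp add: algebra_simps)
  qed
  then have "int a * int l < (int a' + 1) * int l" and "int a' * int l < (int a + 1) * int l"
    using assms(3,4) by (meson le_less_trans)+
  then have "int a < int a' + 1" and "int a' < int a + 1"
    using \<open>0 < l\<close> mult_less_cancel_right_pos[of "int l"] by simp_all
  then show "a = a'"
    by simp
qed

lemma sum_moves_in_bands_le:
  assumes play: "cup_play l n T s" and "0 < l"
  shows "(\<Sum>a<m. \<Sum>t<T. if band.moves_in_band n l (int (a * l)) (s t) (s (Suc t)) then 1 else 0) \<le> real T"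
proof -
  have "(\<Sum>a<m. if band.moves_in_band n l (int (a * l)) (s t) (s (Suc t)) then 1 else 0) \<le> (1::real)"
    if "t < T" for t
  proof -
    have "card ({..<m} \<inter> {a. band.moves_in_band n l (int (a * l)) (s t) (s (Suc t))}) \<le> Suc 0"
      using moves_in_band_unique[OF cup_play_step[OF play that] \<open>0 < l\<close>]
      by (subst card_le_Suc0_iff_eq) auto
    then show ?thesis
      by (simp add: of_bool_def[symmetric])
  qed
  then have "(\<Sum>t<T. \<Sum>a<m. if band.moves_in_band n l (int (a * l)) (s t) (s (Suc t)) then 1 else 0)
      \<le> (\<Sum>t<T. (1::real))"
    by (intro sum_mono) simp
  then show ?thesis
    by (subst sum.swap) simp
qed

lemma cup_play_ratio_squares_le:
  fixes l n T :: nat and s :: "nat \<Rightarrow> nat \<Rightarrow> int"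
  defines "E \<equiv> \<lambda>a. count_cups n (s T) (\<lambda>v. int (a * l) \<le> v)"
  assumes play: "cup_play l n T s" and "2 \<le> l" and pos: "0 < E m"
  shows "real l * (real l - 1)\<^sup>2 * (\<Sum>a<m. (E (Suc a) / E a)\<^sup>2) \<le> 6 * real T"
proof -
  define M where "M a = (\<Sum>t<T. if band.moves_in_band n l (int (a * l)) (s t) (s (Suc t)) then 1 else (0::real))"
    for a
  have E_pos: "0 < E a" if "a \<le> m" for a
    using pos count_above_checkpoint_antimono[OF that, of n "s T" l] unfolding E_def by simp
  have "(E (Suc a) / E a)\<^sup>2 * (real l * (real l - 1)\<^sup>2) \<le> 6 * M a" if "a < m" for a
  proof -
    interpret band n l "int (a * l)"
      using \<open>2 \<le> l\<close> by (intro band_at_multiple) simp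
    have "(\<lambda>v. int (a * l) + int l \<le> v) = (\<lambda>v. int (Suc a * l) \<le> v)"
      by (simp add: algebra_simps)
    then have "(E (Suc a))\<^sup>2 * (real l * (real l - 1)\<^sup>2) \<le> 6 * M a * (E a)\<^sup>2"
      using moves_in_band_lower_bound[OF play \<open>2 \<le> l\<close>] E_pos[of "Suc a"] that
      unfolding E_def M_def by simp
    then show ?thesis
      using E_pos[of a] that by (simp add: power_divide field_simps)
  qed
  then have "(\<Sum>a<m. (E (Suc a) / E a)\<^sup>2) * (real l * (real l - 1)\<^sup>2) \<le> (\<Sum>a<m. 6 * M a)"
    unfolding sum_distrib_right by (intro sum_mono) simp
  also have "\<dots> \<le> 6 * real T"
    using sum_moves_in_bands_le[OF play, of m] \<open>2 \<le> l\<close> unfolding M_def sum_distrib_left[symmetric] by simp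
  finally show ?thesis
    by (simp add: algebra_simps)
qed

lemma sum_squares_checkpoint_ratios_ge:
  fixes l n T h :: nat and s :: "nat \<Rightarrow> nat \<Rightarrow> int"
  defines "E \<equiv> \<lambda>a. count_cups n (s T) (\<lambda>v. int (a * l) \<le> v)"
  assumes play: "cup_play l n T s" and "0 < l" and "0 < h" and top: "\<exists>i<n. int (4 * h * l) \<le> s T i"
  shows "0 < E (2 * h)"
    and "2 * real h * exp (- (ln (real n) - ln (real (2 * h * l))) / real h) \<le> (\<Sum>a<2 * h. (E (Suc a) / E a)\<^sup>2)"
proof -
  have "real (2 * h * l) \<le> E (2 * h)"
    using count_above_checkpoint_ge[OF play \<open>0 < l\<close> top, of "2 * h"] unfolding E_def by simp
  moreover have "0 < real (2 * h * l)"
    using \<open>0 < h\<close> \<open>0 < l\<close> by simp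
  ultimately have "ln (real (2 * h * l)) \<le> ln (E (2 * h))"
    by simp
  show top_pos: "0 < E (2 * h)"
    using \<open>0 < real (2 * h * l)\<close> \<open>real (2 * h * l) \<le> E (2 * h)\<close> by simp
  have E_pos: "0 < E a" if "a \<le> 2 * h" for a
    using top_pos count_above_checkpoint_antimono[OF that, of n "s T" l] unfolding E_def by simp
  have "ln (E 0) \<le> ln (real n)"
    using E_pos[of 0] count_cups_le[of n "s T"] unfolding E_def by (intro ln_mono) simp_all
  with \<open>ln (real (2 * h * l)) \<le> ln (E (2 * h))\<close>
  have "- (ln (real n) - ln (real (2 * h * l))) / real h \<le> (ln (E (2 * h)) - ln (E 0)) / real h"
    by (intro divide_right_mono) simp_all
  also have "\<dots> = 2 * (ln (E (2 * h)) - ln (E 0)) / real (2 * h)"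
    using \<open>0 < h\<close> by (simp add: field_simps)
  finally have "exp (- (ln (real n) - ln (real (2 * h * l))) / real h)
      \<le> exp (2 * (ln (E (2 * h)) - ln (E 0)) / real (2 * h))"
    by simp
  from mult_left_mono[OF this, of "real (2 * h)"]
  have "2 * real h * exp (- (ln (real n) - ln (real (2 * h * l))) / real h)
      \<le> real (2 * h) * exp (2 * (ln (E (2 * h)) - ln (E 0)) / real (2 * h))"
    by simp
  also have "\<dots> \<le> (\<Sum>a<2 * h. (E (Suc a) / E a)\<^sup>2)"
    using \<open>0 < h\<close> E_pos by (intro sum_squares_ratios_ge) simp_all
  finally show "2 * real h * exp (- (ln (real n) - ln (real (2 * h * l))) / real h)
      \<le> (\<Sum>a<2 * h. (E (Suc a) / E a)\<^sup>2)" .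
qed

lemma overflow_time_bound:
  assumes play: "cup_play l n T s" and "2 \<le> l" and "0 < h" and top: "\<exists>i<n. int (4 * h * l) \<le> s T i"
  shows "real h * real l ^ 3 * exp (- (ln (real n) - ln (real (2 * h * l))) / real h) \<le> 12 * real T"
proof -
  define X where "X = exp (- (ln (real n) - ln (real (2 * h * l))) / real h)"
  define W where "W = real l * (real l - 1)\<^sup>2"
  define S where "S = (\<Sum>a<2 * h. (count_cups n (s T) (\<lambda>v. int (Suc a * l) \<le> v)
      / count_cups n (s T) (\<lambda>v. int (a * l) \<le> v))\<^sup>2)"
  have "0 < l"
    using \<open>2 \<le> l\<close> by simp
  note ratios = sum_squares_checkpoint_ratios_ge[OF play \<open>0 < l\<close> \<open>0 < h\<close> top]
  have "real h * real l ^ 3 * X \<le> real h * (4 * W) * X"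
    using cube_le_four_mult_pred_sq[of "real l"] \<open>2 \<le> l\<close> unfolding X_def W_def
    by (intro mult_right_mono mult_left_mono) simp_all
  also have "\<dots> = 2 * W * (2 * real h * X)"
    by (simp add: algebra_simps)
  also have "\<dots> \<le> 2 * W * S"
    using ratios(2) \<open>2 \<le> l\<close> unfolding X_def W_def S_def by (intro mult_left_mono) simp_all
  also have "\<dots> \<le> 12 * real T"
    using cup_play_ratio_squares_le[OF play \<open>2 \<le> l\<close>, of "2 * h"] ratios(1) unfolding W_def S_def
    by (simp add: mult.assoc)
  finally show ?thesis
    unfolding X_def .
qed

lemma div_bounds:
  fixes h k :: nat
  assumes "0 < h" and "h \<le> k"
  shows "1 \<le> k div h" and "h * (k div h) \<le> k" and "k \<le> 2 * h * (k div h)"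
proof -
  have "h div h \<le> k div h"
    using assms(2) by (rule div_le_mono)
  then show "1 \<le> k div h"
    using assms(1) by simp
  show "h * (k div h) \<le> k"
    by (simp add: times_div_less_eq_dividend)
  have "k = h * (k div h) + k mod h"
    by simp
  moreover have "k mod h < h"
    using assms(1) by simp
  moreover have "h \<le> h * (k div h)"
    using \<open>1 \<le> k div h\<close> by simp
  ultimately show "k \<le> 2 * h * (k div h)"
    by linarith
qed

lemma exp_neg_inverse_le:
  fixes \<alpha> :: real and k n m h :: nat
  assumes "0 < \<alpha>" and "0 < k" and "k \<le> n" and "k \<le> m" and "0 < h"
    and h_ge: "\<alpha> * ln (real n / real k + 1) \<le> real h"
  shows "exp (- 1 / \<alpha>) \<le> exp (- (ln (real n) - ln (real m)) / real h)"
proof -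
  have "ln (real n) - ln (real m) \<le> ln (real n) - ln (real k)"
    using assms(2,4) by simp
  also have "\<dots> = ln (real n / real k)"
    using assms(2,3) by (simp add: ln_div)
  also have "\<dots> \<le> ln (real n / real k + 1)"
    using assms(2,3) by (intro ln_mono) simp_all
  also have "\<dots> \<le> real h / \<alpha>"
    using h_ge \<open>0 < \<alpha>\<close> by (simp add: pos_le_divide_eq mult.commute)
  finally have "- 1 / \<alpha> \<le> - (ln (real n) - ln (real m)) / real h"
    using \<open>0 < h\<close> \<open>0 < \<alpha>\<close> by (simp add: field_simps)
  then show ?thesis
    by simp
qed

lemma cup_play_time_lower_bound:
  fixes \<alpha> :: real
  assumes "0 < \<alpha>" and "0 < k" and "k \<le> n" and h_ge: "\<alpha> * ln (real n / real k + 1) \<le> real h"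
    and "2 \<le> h" and "h \<le> k" and play: "cup_play (k div h) n T s" and top: "\<exists>i < n. 4 * int k \<le> s T i"
  shows "exp (- 1 / \<alpha>) / 12 * real h * real (k div h) ^ 3 \<le> real T"
proof -
  define l where "l = k div h"
  have l: "1 \<le> l" "h * l \<le> k" "k \<le> 2 * h * l"
    using div_bounds[of h k] assms(5,6) unfolding l_def by simp_all
  obtain i where "i < n" "4 * int k \<le> s T i"
    using top by blast
  then have "4 * k \<le> T"
    using cup_play_fill_le[OF play le_refl, of i] by simp
  consider "l = 1" | "2 \<le> l"
    using l by linarith
  then show ?thesis
  proof cases
    case 1
    have "exp (- 1 / \<alpha>) * real h \<le> 1 * real h"
      using \<open>0 < \<alpha>\<close> by (intro mult_right_mono) simp_all
    then show ?thesis
      using 1 \<open>h \<le> k\<close> \<open>4 * k \<le> T\<close> unfolding l_def by simp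
  next
    case 2
    have "exp (- 1 / \<alpha>) * (real h * real l ^ 3)
        \<le> exp (- (ln (real n) - ln (real (2 * h * l))) / real h) * (real h * real l ^ 3)"
      using exp_neg_inverse_le[OF \<open>0 < \<alpha>\<close> \<open>0 < k\<close> \<open>k \<le> n\<close> l(3)] \<open>2 \<le> h\<close> h_ge
      by (intro mult_right_mono) simp_all
    moreover have "int (4 * h * l) \<le> s T i"
      using l \<open>4 * int k \<le> s T i\<close> by linarith
    with \<open>i < n\<close> have "real h * real l ^ 3 * exp (- (ln (real n) - ln (real (2 * h * l))) / real h)
        \<le> 12 * real T"
      using \<open>2 \<le> h\<close> by (intro overflow_time_bound[OF play[folded l_def] 2]) auto
    ultimately show ?thesis
      unfolding l_def[symmetric] by (simp add: algebra_simps)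
  qed
qed

theorem theorem6p6:
  fixes \<alpha> \<beta> :: real
  assumes "0 < \<alpha>" and "\<alpha> \<le> \<beta>"
  shows "\<exists>c::real > 0. \<forall>(k::nat) (n::nat) (h::nat) (T::nat) s.
           0 < k \<longrightarrow> k \<le> n \<longrightarrow>
           \<alpha> * ln (real n / real k + 1) \<le> real h \<longrightarrow>
           real h \<le> \<beta> * ln (real n / real k + 1) \<longrightarrow>
           2 \<le> h \<longrightarrow> h \<le> k \<longrightarrow>
           cup_play (k div h) n T s \<longrightarrow>
           (\<exists>i < n. s T i \<ge> 4 * int k) \<longrightarrow>
           real T \<ge> c * real h * real (k div h) ^ 3"
  using cup_play_time_lower_bound[OF \<open>0 < \<alpha>\<close>] by (intro exI[of _ "exp (- 1 / \<alpha>) / 12"]) auto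

end
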